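(* Let the setting be as in the context. For any function $\Phi:\omega_{h\widehat1}\times\{t_m\}_{m\ge0}\to\mathbb C$ with $\Phi^0=0$ and any $M\ge1$, \[ \mathrm{Im}\sum_{m=1}^M\Bigl(\mathcal S^m_{\rm ref}\mathbf\Phi^m,\ \frac{\Phi^{m-1}+\Phi^m}{2}\Bigr)_{\omega_{h\widehat1}}\tau\ \ge\ 0 . \]
   Context: Let $n\ge2$, $\hbar>0$, $c_\hbar>0$, $V_\infty\in\mathbb R$, $\tau>0$ and $t_m=m\tau$. Let $X_1,\dots,X_n>0$, integers $J_k\ge2$, $h_k=X_k/J_k$; $\omega_{h\widehat1}=\{(j_2h_2,\dots,j_nh_n):1\le j_k\le J_k-1\}$, with inner product $(U,W)_{\omega_{h\widehat1}}=\sum_{j_2=1}^{J_2-1}\cdots\sum_{j_n=1}^{J_n-1}U_{j_2,\dots,j_n}W^*_{j_2,\dots,j_n}h_2\cdots h_n$. Discrete sine transform in $x_k$ ($k\ge2$): $(\mathcal F_kP)^{(q)}=\frac2{J_k}\sum_{j=1}^{J_k-1}P_j\sin\frac{\pi qj}{J_k}$, $(\mathcal F_k^{-1}P^{(\cdot)})_j=\sum_{q=1}^{J_k-1}P^{(q)}\sin\frac{\pi qj}{J_k}$; $\lambda^{(k)}_q=\bigl(\frac2{h_k}\sin\frac{\pi qh_k}{2X_k}\bigr)^2$, $\sigma^{(k)}_q=1-\frac13\sin^2\frac{\pi qh_k}{2X_k}$. Discrete convolution $(R*Q)^m=\sum_{p=0}^mR^pQ^{m-p}$. With $\mathbf\Phi^m=\{\Phi^0,\dots,\Phi^m\}$,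 $\Phi^{\mathbf q}=(\mathcal F_n\cdots(\mathcal F_2\Phi)^{(q_2)}\cdots)^{(q_n)}$ for $\mathbf q=(q_2,\dots,q_n)$, $1\le q_k\le J_k-1$, define $\mathcal S^m_{\rm ref}\mathbf\Phi^m=\mathcal F_2^{-1}\cdots\mathcal F_n^{-1}\bigl[\sigma^{(2)}_{q_2}\cdots\sigma^{(n)}_{q_n}(R_{\mathbf q}*\Phi^{\mathbf q})^m\bigr]$, where $R_{\mathbf q}=R[V_{\infty,\mathbf q}]$ with $V_{\infty,\mathbf q}=V_\infty+c_\hbar\sum_{k=2}^n\lambda^{(k)}_{q_k}/\sigma^{(k)}_{q_k}$. For real $W_\infty$, $R[W_\infty]=(R^m)_{m\ge0}$ is given by $R^0=c_1$, $R^1=-c_1\varkappa\mu$, $R^m=\frac{2m-3}{m}\varkappa\mu R^{m-1}-\frac{m-3}{m}\varkappa^2R^{m-2}$ for $m\ge2$, where $a=\frac{W_\infty}{2c_\hbar}+i\frac{\hbar}{\tau c_\hbar}$, $\alpha=2a+\frac23h_1^2a^2\ (\ne0)$, $\arg\alpha\in(0,2\pi)$, $\beta=2\,\mathrm{Re}\,a+\frac23h_1^2|a|^2$, $c_1=-\frac{|\alpha|^{1/2}}2e^{-i(\arg\alpha)/2}$, $\varkappa=-e^{i\arg\alpha}$, $\mu=\beta/|\alpha|\in(-1,1)$. *)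

theory Defs
  imports Complex_Main "HOL-Library.FuncSet"
begin

(* Index vectors q = (q_2,...,q_n) are functions nat => nat; only coordinates 2..n matter.
   Grid functions are (nat => nat) => complex. *)

definition grid :: "nat \<Rightarrow> (nat \<Rightarrow> nat) \<Rightarrow> (nat \<Rightarrow> nat) set" where
  "grid n J = PiE {2..n} (\<lambda>k. {1..<J k})"

definition dst :: "(nat \<Rightarrow> nat) \<Rightarrow> nat \<Rightarrow> ((nat \<Rightarrow> nat) \<Rightarrow> complex) \<Rightarrow> ((nat \<Rightarrow> nat) \<Rightarrow> complex)" where
  "dst J k P = (\<lambda>q. complex_of_real (2 / real (J k)) *
      (\<Sum>j\<in>{1..<J k}. P (q(k := j)) * complex_of_real (sin (pi * real (q k) * real j / real (J k)))))"

definition idst :: "(nat \<Rightarrow> nat) \<Rightarrow> nat \<Rightarrow> ((nat \<Rightarrow> nat) \<Rightarrow> complex) \<Rightarrow> ((nat \<Rightarrow> nat) \<Rightarrow> complex)" where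
  "idst J k P = (\<lambda>j.
      (\<Sum>q\<in>{1..<J k}. P (j(k := q)) * complex_of_real (sin (pi * real q * real (j k) / real (J k)))))"

definition dst_all :: "nat \<Rightarrow> (nat \<Rightarrow> nat) \<Rightarrow> ((nat \<Rightarrow> nat) \<Rightarrow> complex) \<Rightarrow> ((nat \<Rightarrow> nat) \<Rightarrow> complex)" where
  "dst_all n J P = foldl (\<lambda>Q k. dst J k Q) P [2..<Suc n]"

definition idst_all :: "nat \<Rightarrow> (nat \<Rightarrow> nat) \<Rightarrow> ((nat \<Rightarrow> nat) \<Rightarrow> complex) \<Rightarrow> ((nat \<Rightarrow> nat) \<Rightarrow> complex)" where
  "idst_all n J P = foldr (\<lambda>k Q. idst J k Q) [2..<Suc n] P"

definition arg02 :: "complex \<Rightarrow> real" where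
  "arg02 z = (if Arg z > 0 then Arg z else Arg z + 2 * pi)"

definition Rcoef_a :: "real \<Rightarrow> real \<Rightarrow> real \<Rightarrow> real \<Rightarrow> complex" where
  "Rcoef_a hbar ch tau W = complex_of_real (W / (2 * ch)) + \<i> * complex_of_real (hbar / (tau * ch))"

definition Rcoef_alpha :: "real \<Rightarrow> real \<Rightarrow> real \<Rightarrow> real \<Rightarrow> real \<Rightarrow> complex" where
  "Rcoef_alpha hbar ch tau h1 W =
     (let a = Rcoef_a hbar ch tau W in 2 * a + complex_of_real (2/3 * h1^2) * a^2)"

definition Rcoef_beta :: "real \<Rightarrow> real \<Rightarrow> real \<Rightarrow> real \<Rightarrow> real \<Rightarrow> real" where
  "Rcoef_beta hbar ch tau h1 W =
     (let a = Rcoef_a hbar ch tau W in 2 * Re a + 2/3 * h1^2 * (cmod a)^2)"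

definition Rcoef_c1 :: "real \<Rightarrow> real \<Rightarrow> real \<Rightarrow> real \<Rightarrow> real \<Rightarrow> complex" where
  "Rcoef_c1 hbar ch tau h1 W =
     (let \<alpha> = Rcoef_alpha hbar ch tau h1 W in
       - complex_of_real (sqrt (cmod \<alpha>) / 2) * exp (- \<i> * complex_of_real (arg02 \<alpha> / 2)))"

definition Rcoef_kappa :: "real \<Rightarrow> real \<Rightarrow> real \<Rightarrow> real \<Rightarrow> real \<Rightarrow> complex" where
  "Rcoef_kappa hbar ch tau h1 W = - exp (\<i> * complex_of_real (arg02 (Rcoef_alpha hbar ch tau h1 W)))"

definition Rcoef_mu :: "real \<Rightarrow> real \<Rightarrow> real \<Rightarrow> real \<Rightarrow> real \<Rightarrow> real" where
  "Rcoef_mu hbar ch tau h1 W = Rcoef_beta hbar ch tau h1 W / cmod (Rcoef_alpha hbar ch tau h1 W)"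

fun Rseq :: "real \<Rightarrow> real \<Rightarrow> real \<Rightarrow> real \<Rightarrow> real \<Rightarrow> nat \<Rightarrow> complex" where
  "Rseq hbar ch tau h1 W 0 = Rcoef_c1 hbar ch tau h1 W"
| "Rseq hbar ch tau h1 W (Suc 0) =
     - Rcoef_c1 hbar ch tau h1 W * Rcoef_kappa hbar ch tau h1 W * complex_of_real (Rcoef_mu hbar ch tau h1 W)"
| "Rseq hbar ch tau h1 W (Suc (Suc m)) =
     complex_of_real ((2 * real (Suc (Suc m)) - 3) / real (Suc (Suc m)))
       * Rcoef_kappa hbar ch tau h1 W * complex_of_real (Rcoef_mu hbar ch tau h1 W)
       * Rseq hbar ch tau h1 W (Suc m)
     - complex_of_real ((real (Suc (Suc m)) - 3) / real (Suc (Suc m)))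
       * (Rcoef_kappa hbar ch tau h1 W)^2 * Rseq hbar ch tau h1 W m"

definition lam :: "(nat \<Rightarrow> real) \<Rightarrow> (nat \<Rightarrow> nat) \<Rightarrow> nat \<Rightarrow> nat \<Rightarrow> real" where
  "lam X J k q = (let h = X k / real (J k) in (2 / h * sin (pi * real q * h / (2 * X k)))^2)"

definition sig :: "(nat \<Rightarrow> real) \<Rightarrow> (nat \<Rightarrow> nat) \<Rightarrow> nat \<Rightarrow> nat \<Rightarrow> real" where
  "sig X J k q = (let h = X k / real (J k) in 1 - 1/3 * (sin (pi * real q * h / (2 * X k)))^2)"

definition Vq :: "nat \<Rightarrow> real \<Rightarrow> real \<Rightarrow> (nat \<Rightarrow> real) \<Rightarrow> (nat \<Rightarrow> nat) \<Rightarrow> (nat \<Rightarrow> nat) \<Rightarrow> real" where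
  "Vq n V ch X J q = V + ch * (\<Sum>k=2..n. lam X J k (q k) / sig X J k (q k))"

(* S^m_ref applied to Phi^0..Phi^m; Phi m is the grid function at time t_m *)
definition Sref :: "nat \<Rightarrow> real \<Rightarrow> real \<Rightarrow> real \<Rightarrow> real \<Rightarrow> (nat \<Rightarrow> real) \<Rightarrow> (nat \<Rightarrow> nat)
    \<Rightarrow> (nat \<Rightarrow> (nat \<Rightarrow> nat) \<Rightarrow> complex) \<Rightarrow> nat \<Rightarrow> ((nat \<Rightarrow> nat) \<Rightarrow> complex)" where
  "Sref n hbar ch V tau X J Phi m =
     idst_all n J (\<lambda>q. complex_of_real (\<Prod>k=2..n. sig X J k (q k)) *
        (\<Sum>p=0..m. Rseq hbar ch tau (X 1 / real (J 1)) (Vq n V ch X J q) p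
                     * dst_all n J (Phi (m - p)) q))"

definition inner_grid :: "nat \<Rightarrow> (nat \<Rightarrow> real) \<Rightarrow> (nat \<Rightarrow> nat) \<Rightarrow> ((nat \<Rightarrow> nat) \<Rightarrow> complex)
    \<Rightarrow> ((nat \<Rightarrow> nat) \<Rightarrow> complex) \<Rightarrow> complex" where
  "inner_grid n X J U W = (\<Sum>j\<in>grid n J. U j * cnj (W j)
       * complex_of_real (\<Prod>k=2..n. X k / real (J k)))"

end

theory Submission
  imports Defs "HOL-Complex_Analysis.Complex_Analysis"
begin

no_notation vec_nth (infixl \<open>$\<close> 90)

text \<open>
  After the sine transforms in x_2, ..., x_n, whose transposes are positive multiples of their
  inverses, the sum becomes a combination with nonnegative weights \<sigma>_q of one-dimensional sums
  Im \<Sum>_m (R * \<phi>)^m cnj (\<phi>^(m-1) + \<phi>^m). The recurrence defining R is the one satisfied by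
  the Taylor coefficients of a square root of a quadratic, so R is the Taylor sequence of
  G(z) = c_1 sqrt ((1 - \<kappa> e^(i\<theta>) z) (1 - \<kappa> e^(-i\<theta>) z)) with cos \<theta> = \<mu>, which is holomorphic in
  the unit disc. With \<Psi> = (1 + z) \<Phi> the one-dimensional sum is the Toeplitz form
  Im \<Sum>_(m \<le> M) (K \<Psi>)_m cnj \<Psi>_m of K = G / (1 + z). Writing 4 K^2 = 2 b + \<gamma> b^2 with
  b = (cnj a + a z) / (1 + z), which has Im b < 0, shows that K takes no real value in the disc;
  since Im K(0) \<ge> 0, Im K > 0 there. By Cauchy's formula
  such a Toeplitz form is the mean of K |P|^2 over a circle, P the truncation of \<Psi>, so its
  imaginary part is nonnegative.
\<close>

section \<open>Power series whose square is a quadratic\<close>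

lemma fps_square_eq_const_mult_imp_deriv:
  fixes F Q :: "'a::idom fps"
  assumes "F * F = fps_const C * Q" and "C \<noteq> 0"
  shows "Q * (2 * fps_deriv F) = fps_deriv Q * F"
proof -
  have "fps_const C * (Q * (2 * fps_deriv F)) = 2 * (F * F) * fps_deriv F"
    by (simp add: assms(1) algebra_simps)
  also have "\<dots> = F * fps_deriv (F * F)"
    by (simp add: algebra_simps)
  also have "\<dots> = fps_const C * (fps_deriv Q * F)"
    by (simp add: assms(1) algebra_simps)
  finally show ?thesis using assms(2) by simp
qed

lemma fps_sqrt_quadratic_nth:
  fixes F :: "'a::field_char_0 fps"
  assumes "F * F = fps_const C * (1 + fps_const q1 * fps_X + fps_const q2 * fps_X^2)"
    and "C \<noteq> 0"
  shows "2 * F $ 1 = q1 * F $ 0"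
    and "2 * of_nat (j + 2) * F $ (j + 2) + q1 * of_nat (2 * j + 1) * F $ (j + 1)
           + 2 * q2 * (of_nat j - 1) * F $ j = 0"
proof -
  define Q where "Q = 1 + fps_const q1 * fps_X + fps_const q2 * (fps_X :: 'a fps)^2"
  have E: "Q * (2 * fps_deriv F) = fps_deriv Q * F"
    using fps_square_eq_const_mult_imp_deriv assms unfolding Q_def .
  have dQ: "fps_deriv Q = fps_const q1 + fps_const (2 * q2) * fps_X"
    unfolding Q_def by (simp add: fps_deriv_power fps_const_mult[symmetric] del: fps_const_mult)
  have Q_nth: "(Q * G) $ n = G $ n + q1 * (if n = 0 then 0 else G $ (n - 1))
      + q2 * (if n < 2 then 0 else G $ (n - 2))" for G n
    unfolding Q_def by (simp add: distrib_right fps_X_power_mult_nth mult.assoc)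
  have dQ_nth: "(fps_deriv Q * G) $ n = q1 * G $ n + 2 * q2 * (if n = 0 then 0 else G $ (n - 1))"
    for G n
    unfolding dQ by (simp add: distrib_right mult.assoc)
  have D_nth: "(2 * fps_deriv F) $ n = 2 * (of_nat (n + 1) * F $ (n + 1))" for n
    by (simp add: fps_deriv_def)
  show "2 * F $ 1 = q1 * F $ 0"
    using arg_cong[OF E, of "\<lambda>A. A $ 0"] unfolding Q_nth dQ_nth D_nth by simp
  show "2 * of_nat (j + 2) * F $ (j + 2) + q1 * of_nat (2 * j + 1) * F $ (j + 1)
           + 2 * q2 * (of_nat j - 1) * F $ j = 0"
    using arg_cong[OF E, of "\<lambda>A. A $ (j + 1)"] unfolding Q_nth dQ_nth D_nth
    by (cases j) (simp_all add: algebra_simps)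
qed

lemma fps_nth_eq_Rseq:
  fixes F :: "complex fps" and hb ch tau h1 W :: real
  defines "c1 \<equiv> Rcoef_c1 hb ch tau h1 W" and "\<kappa> \<equiv> Rcoef_kappa hb ch tau h1 W"
    and "\<mu> \<equiv> Rcoef_mu hb ch tau h1 W"
  assumes FF: "F * F = fps_const (c1^2)
      * (1 + fps_const (- 2 * \<kappa> * of_real \<mu>) * fps_X + fps_const (\<kappa>^2) * fps_X^2)"
    and F0: "F $ 0 = c1" and c1: "c1 \<noteq> 0"
  shows "F $ m = Rseq hb ch tau h1 W m"
proof (induction m rule: induct_nat_012)
  case 0
  show ?case using F0 by (simp add: c1_def)
next
  case 1
  show ?case using fps_sqrt_quadratic_nth(1)[OF FF] F0 c1 by (simp add: c1_def \<kappa>_def \<mu>_def)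
next
  case (ge2 j)
  define d :: complex where "d = of_nat (j + 2)"
  have "d \<noteq> 0" unfolding d_def by (metis add_eq_0_iff_both_eq_0 of_nat_eq_0_iff zero_neq_numeral)
  have "2 * (d * F $ (j + 2))
      = 2 * (of_nat (2 * j + 1) * \<kappa> * of_real \<mu> * F $ (j + 1) - (of_nat j - 1) * \<kappa>^2 * F $ j)"
    using fps_sqrt_quadratic_nth(2)[OF FF, of j] c1 unfolding d_def by (simp add: algebra_simps)
  then have "d * F $ (j + 2)
      = of_nat (2 * j + 1) * \<kappa> * of_real \<mu> * F $ (j + 1) - (of_nat j - 1) * \<kappa>^2 * F $ j"
    by (simp only: mult_cancel_left) simp
  then have "F $ (j + 2)
      = (of_nat (2 * j + 1) * \<kappa> * of_real \<mu> * F $ (j + 1) - (of_nat j - 1) * \<kappa>^2 * F $ j) / d"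
    using \<open>d \<noteq> 0\<close> by (simp add: eq_divide_eq mult.commute)
  also have "\<dots> = of_real ((2 * real (j + 2) - 3) / real (j + 2)) * \<kappa> * of_real \<mu> * F $ (j + 1)
      - of_real ((real (j + 2) - 3) / real (j + 2)) * \<kappa>^2 * F $ j"
  proof -
    have c2: "of_real ((2 * real (j + 2) - 3) / real (j + 2)) = (of_nat (2 * j + 1) / d :: complex)"
      and c3: "of_real ((real (j + 2) - 3) / real (j + 2)) = ((of_nat j - 1) / d :: complex)"
      unfolding d_def by simp_all
    show ?thesis unfolding c2 c3 by (subst diff_divide_distrib) (simp only: times_divide_eq_left)
  qed
  finally show ?case using ge2 by (simp add: \<kappa>_def \<mu>_def eval_nat_numeral)
qed

section \<open>The generating function of R\<close>

lemma quadratic_real_value_neg: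
  fixes b :: complex and \<gamma> :: real
  assumes "Im b < 0" and "\<gamma> \<ge> 0" and "Im (2 * b + of_real \<gamma> * b^2) = 0"
  shows "Re (2 * b + of_real \<gamma> * b^2) < 0"
proof -
  have "Im b * (2 + 2 * \<gamma> * Re b) = 0"
    using assms(3) by (simp add: power2_eq_square algebra_simps)
  then have "\<gamma> * Re b = -1" using assms(1) by simp
  then have "Re b < 0" using assms(2) by (smt (verit) mult_nonneg_nonneg)
  moreover have "Re (2 * b + of_real \<gamma> * b^2) = Re b - \<gamma> * (Im b)^2"
    using \<open>\<gamma> * Re b = -1\<close> by (simp add: power2_eq_square algebra_simps)
  ultimately show ?thesis using assms(2) by (smt (verit) mult_nonneg_nonneg zero_le_power2)
qed

lemma Im_moebius_neg:
  fixes a z :: complex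
  assumes "Im a > 0" and "norm z < 1"
  shows "Im ((cnj a + a * z) / (1 + z)) < 0"
proof -
  have "(norm z)^2 < 1" using assms(2) by (simp add: power_less_one_iff)
  then have "(Re z)^2 + (Im z)^2 < 1" by (simp add: cmod_power2)
  moreover have "Im ((cnj a + a * z) * cnj (1 + z)) = - Im a * (1 - ((Re z)^2 + (Im z)^2))"
    by (simp add: algebra_simps power2_eq_square)
  ultimately have "Im ((cnj a + a * z) * cnj (1 + z)) < 0"
    using assms(1) by simp
  moreover have "1 + z \<noteq> 0" using assms(2) by (metis add.inverse_unique norm_minus_cancel norm_one order.irrefl)
  ultimately show ?thesis
    by (simp add: Im_divide divide_neg_pos sum_power2_gt_zero_iff complex_eq_iff power2_eq_square[symmetric])
qed

lemma connected_continuous_pos: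
  fixes f :: "'a::topological_space \<Rightarrow> real"
  assumes "connected S" and "continuous_on S f" and "\<And>x. x \<in> S \<Longrightarrow> f x \<noteq> 0"
    and "a \<in> S" and "f a > 0" and "x \<in> S"
  shows "f x > 0"
proof (rule ccontr)
  assume "\<not> f x > 0"
  have "connected (f ` S)" using assms(2,1) by (rule connected_continuous_image)
  then have "0 \<in> f ` S"
    using connectedD_interval[of "f ` S" "f x" "f a" 0] \<open>\<not> f x > 0\<close> assms(4-6) by auto
  then show False using assms(3) by auto
qed

lemma Im_sqrt_quadratic_div_pos:
  fixes a :: complex and \<gamma> :: real and G :: "complex \<Rightarrow> complex"
  assumes "Im a > 0" and "\<gamma> \<ge> 0" and "continuous_on (ball 0 1) G"
    and G_sq: "\<And>z. 4 * G z ^ 2 = (2 * cnj a + of_real \<gamma> * cnj a ^ 2)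
        + 2 * (a + cnj a + of_real \<gamma> * a * cnj a) * z + (2 * a + of_real \<gamma> * a ^ 2) * z ^ 2"
    and "Im (G 0) \<ge> 0" and "z \<in> ball 0 1"
  shows "Im (G z / (1 + z)) > 0"
proof -
  have nonzero: "1 + z \<noteq> 0" if "z \<in> ball 0 1" for z :: complex
    using that by (metis add.inverse_unique dist_0_norm mem_ball norm_minus_cancel norm_one order.irrefl)
  have nonreal: "Im (G z / (1 + z)) \<noteq> 0" if "z \<in> ball 0 1" for z
  proof
    define b where "b = (cnj a + a * z) / (1 + z)"
    assume "Im (G z / (1 + z)) = 0"
    then have "G z / (1 + z) = of_real (Re (G z / (1 + z)))" by (simp add: complex_eq_iff)
    moreover have "4 * (G z / (1 + z)) ^ 2 = 2 * b + of_real \<gamma> * b ^ 2"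
    proof -
      have b_mult: "b * (1 + z) = cnj a + a * z" unfolding b_def using nonzero[OF that] by simp
      have "(2 * b + of_real \<gamma> * b ^ 2) * (1 + z) ^ 2
          = 2 * (b * (1 + z)) * (1 + z) + of_real \<gamma> * (b * (1 + z)) ^ 2"
        by (simp add: algebra_simps power2_eq_square)
      also have "\<dots> = 2 * (cnj a + a * z) * (1 + z) + of_real \<gamma> * (cnj a + a * z) ^ 2"
        unfolding b_mult ..
      also have "\<dots> = 4 * G z ^ 2" unfolding G_sq by (simp add: algebra_simps power2_eq_square)
      finally have "4 * G z ^ 2 = (2 * b + of_real \<gamma> * b ^ 2) * (1 + z) ^ 2" ..
      then show ?thesis using nonzero[OF that] by (simp add: power_divide)
    qed
    ultimately have "2 * b + of_real \<gamma> * b ^ 2 = of_real (4 * (Re (G z / (1 + z)))^2)"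
      by (metis of_real_mult of_real_numeral of_real_power)
    moreover have "Im b < 0" using Im_moebius_neg[OF assms(1)] that unfolding b_def by simp
    ultimately show False using quadratic_real_value_neg[OF _ assms(2)] by fastforce
  qed
  show ?thesis
  proof (rule connected_continuous_pos[OF connected_ball _ nonreal])
    show "continuous_on (ball 0 1) (\<lambda>z. Im (G z / (1 + z)))"
      using nonzero by (intro continuous_intros assms(3)) auto
    show "Im (G 0 / (1 + 0)) > 0" using assms(5) nonreal[of 0] by force
  qed (use assms(6) in auto)
qed

lemma exp_i_Arg: "z \<noteq> 0 \<Longrightarrow> exp (\<i> * of_real (Arg z)) = z / of_real (cmod z)"
  by (metis cis_Arg cis_conv_exp mult.commute sgn_eq)

locale R_coefficients =
  fixes hb ch tau h1 W :: real
  assumes hb_pos: "hb > 0" and ch_pos: "ch > 0" and tau_pos: "tau > 0" and h1_pos: "h1 > 0"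
begin

abbreviation "a \<equiv> Rcoef_a hb ch tau W"
abbreviation "\<alpha> \<equiv> Rcoef_alpha hb ch tau h1 W"
abbreviation "\<beta> \<equiv> Rcoef_beta hb ch tau h1 W"
abbreviation "c1 \<equiv> Rcoef_c1 hb ch tau h1 W"
abbreviation "\<kappa> \<equiv> Rcoef_kappa hb ch tau h1 W"
abbreviation "\<mu> \<equiv> Rcoef_mu hb ch tau h1 W"
abbreviation "\<gamma> \<equiv> 2/3 * h1^2"

lemma Im_a_pos: "Im a > 0"
  unfolding Rcoef_a_def using hb_pos ch_pos tau_pos by simp

lemma alpha_eq: "\<alpha> = 2 * a + of_real \<gamma> * a ^ 2"
  unfolding Rcoef_alpha_def Let_def by simp

lemma beta_eq: "of_real \<beta> = a + cnj a + of_real \<gamma> * a * cnj a"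
  unfolding Rcoef_beta_def Let_def complex_add_cnj
  by (simp add: mult.assoc complex_norm_square[symmetric])

lemma alpha_factor: "\<alpha> = a * (2 + of_real \<gamma> * a)"
  unfolding alpha_eq by (simp only: power2_eq_square algebra_simps)

lemma alpha_nonzero: "\<alpha> \<noteq> 0"
proof -
  have "Im (2 + of_real \<gamma> * a) > 0" using Im_a_pos h1_pos by simp
  then have "2 + of_real \<gamma> * a \<noteq> 0" by (metis less_irrefl zero_complex.sel(2))
  moreover have "a \<noteq> 0" using Im_a_pos by auto
  ultimately show ?thesis unfolding alpha_factor by simp
qed

lemma abs_mu_le_1: "\<bar>\<mu>\<bar> \<le> 1"
proof -
  have "\<beta> = Re (cnj a * (2 + of_real \<gamma> * a))"
    using arg_cong[OF beta_eq, of Re] by (simp add: algebra_simps)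
  also have "\<bar>\<dots>\<bar> \<le> cmod (cnj a * (2 + of_real \<gamma> * a))"
    by (rule abs_Re_le_cmod)
  also have "\<dots> = cmod \<alpha>"
    unfolding alpha_factor by (simp only: norm_mult complex_mod_cnj)
  finally show ?thesis
    using alpha_nonzero unfolding Rcoef_mu_def by (simp add: divide_le_eq)
qed

lemma exp_i_arg02: "exp (\<i> * of_real (arg02 \<alpha>)) = \<alpha> / of_real (cmod \<alpha>)"
proof -
  have "exp (\<i> * of_real (Arg \<alpha> + 2 * pi)) = exp (\<i> * of_real (Arg \<alpha>))"
    by (simp add: algebra_simps exp_add)
  then show ?thesis unfolding arg02_def using exp_i_Arg[OF alpha_nonzero] by auto
qed

lemma kappa_eq: "\<kappa> = - \<alpha> / of_real (cmod \<alpha>)"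
  unfolding Rcoef_kappa_def exp_i_arg02 by simp

lemma norm_kappa: "cmod \<kappa> = 1"
  using alpha_nonzero unfolding kappa_eq by (simp add: norm_divide)

lemma c1_square: "c1 ^ 2 = cnj \<alpha> / 4"
proof -
  define E where "E = exp (- \<i> * of_real (arg02 \<alpha> / 2))"
  have "E ^ 2 = cnj (exp (\<i> * of_real (arg02 \<alpha>)))"
    unfolding E_def by (simp add: exp_cnj power2_eq_square exp_add[symmetric])
  then have E2: "E ^ 2 = cnj \<alpha> / of_real (cmod \<alpha>)" unfolding exp_i_arg02 by simp
  have "c1 ^ 2 = of_real ((sqrt (cmod \<alpha>) / 2) ^ 2) * E ^ 2"
    unfolding Rcoef_c1_def Let_def E_def[symmetric] by (simp add: power2_eq_square flip: of_real_mult)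
  also have "\<dots> = of_real (cmod \<alpha> / 4) * (cnj \<alpha> / of_real (cmod \<alpha>))"
    unfolding E2 by (simp add: power_divide)
  finally show ?thesis using alpha_nonzero by simp
qed

lemma c1_square_kappa_square: "c1 ^ 2 * \<kappa> ^ 2 = \<alpha> / 4"
proof -
  have "c1 ^ 2 * \<kappa> ^ 2 = (\<alpha> * cnj \<alpha>) * \<alpha> / (4 * of_real (cmod \<alpha>) ^ 2)"
    unfolding c1_square kappa_eq by (simp add: field_simps power2_eq_square)
  then show ?thesis using alpha_nonzero by (simp add: complex_norm_square[symmetric])
qed

lemma c1_square_kappa_mu: "c1 ^ 2 * (2 * \<kappa> * of_real \<mu>) = - of_real \<beta> / 2"
proof -
  have "c1 ^ 2 * (2 * \<kappa> * of_real \<mu>) = - (\<alpha> * cnj \<alpha>) * of_real \<beta> / (2 * of_real (cmod \<alpha>) ^ 2)"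
    unfolding c1_square kappa_eq Rcoef_mu_def by (simp add: field_simps power2_eq_square)
  then show ?thesis using alpha_nonzero by (simp add: complex_norm_square[symmetric])
qed

lemma c1_nonzero: "c1 \<noteq> 0"
  using c1_square alpha_nonzero by auto

lemma Im_c1_nonneg: "Im c1 \<ge> 0"
proof -
  have "0 \<le> arg02 \<alpha> \<and> arg02 \<alpha> \<le> 2 * pi"
    unfolding arg02_def using Arg_bounded[of \<alpha>] by auto
  then have "sin (arg02 \<alpha> / 2) \<ge> 0" by (intro sin_ge_zero) auto
  then show ?thesis unfolding Rcoef_c1_def Let_def by (simp add: Im_exp)
qed

lemma quadratic_factor_unimodular:
  obtains u v where "cmod u = 1" and "cmod v = 1"
    and "\<And>z. (1 - u * z) * (1 - v * z) = 1 + (- 2 * \<kappa> * of_real \<mu>) * z + \<kappa> ^ 2 * z ^ 2"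
proof
  define \<theta> where "\<theta> = arccos \<mu>"
  define u where "u = \<kappa> * exp (\<i> * of_real \<theta>)"
  define v where "v = \<kappa> * exp (- \<i> * of_real \<theta>)"
  show "cmod u = 1" "cmod v = 1" unfolding u_def v_def using norm_kappa by (simp_all add: norm_mult)
  have "exp (\<i> * of_real \<theta>) + exp (- \<i> * of_real \<theta>) = 2 * cos (of_real \<theta>)"
    by (simp add: cos_exp_eq)
  also have "cos (of_real \<theta> :: complex) = of_real \<mu>"
    unfolding \<theta>_def using abs_mu_le_1 by (metis cos_of_real cos_arccos_abs)
  finally have uv_sum: "u + v = \<kappa> * (2 * of_real \<mu>)"
    unfolding u_def v_def distrib_left[symmetric] by (rule arg_cong)
  have uv_prod: "u * v = \<kappa> ^ 2"
    unfolding u_def v_def by (simp add: power2_eq_square algebra_simps exp_add[symmetric])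
  have "(1 - u * z) * (1 - v * z) = 1 - (u + v) * z + (u * v) * z ^ 2" for z
    by (simp add: algebra_simps power2_eq_square)
  then show "(1 - u * z) * (1 - v * z) = 1 + (- 2 * \<kappa> * of_real \<mu>) * z + \<kappa> ^ 2 * z ^ 2" for z
    unfolding uv_sum uv_prod by simp
qed

lemma four_c1_square_quadratic:
  "4 * (c1 ^ 2 * (1 + (- 2 * \<kappa> * of_real \<mu>) * z + \<kappa> ^ 2 * z ^ 2))
     = (2 * cnj a + of_real \<gamma> * cnj a ^ 2) + 2 * (a + cnj a + of_real \<gamma> * a * cnj a) * z
       + (2 * a + of_real \<gamma> * a ^ 2) * z ^ 2"
proof -
  have "4 * (c1 ^ 2 * (1 + (- 2 * \<kappa> * of_real \<mu>) * z + \<kappa> ^ 2 * z ^ 2))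
      = 4 * c1 ^ 2 - 4 * (c1 ^ 2 * (2 * \<kappa> * of_real \<mu>)) * z + 4 * (c1 ^ 2 * \<kappa> ^ 2) * z ^ 2"
    by (simp add: algebra_simps)
  also have "\<dots> = cnj \<alpha> + 2 * of_real \<beta> * z + \<alpha> * z ^ 2"
    unfolding c1_square_kappa_mu c1_square_kappa_square unfolding c1_square by simp
  finally show ?thesis unfolding beta_eq alpha_eq by simp
qed

lemma Rseq_generating_function:
  obtains G where "G holomorphic_on ball 0 1"
    and "\<And>m. fps_expansion G 0 $ m = Rseq hb ch tau h1 W m"
    and "\<And>z. z \<in> ball 0 1 \<Longrightarrow> Im (G z / (1 + z)) > 0"
proof -
  obtain u v where "cmod u = 1" "cmod v = 1"
    and factor: "\<And>z. (1 - u * z) * (1 - v * z) = 1 + (- 2 * \<kappa> * of_real \<mu>) * z + \<kappa> ^ 2 * z ^ 2"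
    using quadratic_factor_unimodular by blast
  have slit: "1 - w * z \<notin> \<real>\<^sub>\<le>\<^sub>0" if "cmod w = 1" "z \<in> ball 0 1" for w z
  proof
    assume "1 - w * z \<in> \<real>\<^sub>\<le>\<^sub>0"
    then have "1 \<le> Re (w * z)" by (simp add: complex_nonpos_Reals_iff)
    also have "\<dots> \<le> cmod (w * z)" by (rule complex_Re_le_cmod)
    also have "\<dots> < 1" using that by (simp add: norm_mult)
    finally show False by simp
  qed
  define G where "G z = c1 * csqrt (1 - u * z) * csqrt (1 - v * z)" for z
  have holo: "G holomorphic_on ball 0 1"
    unfolding G_def using slit \<open>cmod u = 1\<close> \<open>cmod v = 1\<close> by (intro holomorphic_intros) auto
  have G_square: "G z * G z = c1 ^ 2 * (1 + (- 2 * \<kappa> * of_real \<mu>) * z + \<kappa> ^ 2 * z ^ 2)" for z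
  proof -
    have "G z * G z = c1 ^ 2 * csqrt (1 - u * z) ^ 2 * csqrt (1 - v * z) ^ 2"
      unfolding G_def by (simp add: power2_eq_square algebra_simps)
    then show ?thesis unfolding power2_csqrt factor[symmetric] by (simp add: mult.assoc)
  qed
  define F where "F = fps_expansion G 0"
  have "G has_fps_expansion F" unfolding F_def using holo by (intro has_fps_expansion_fps_expansion) auto
  then have "(\<lambda>z. G z * G z) has_fps_expansion F * F" by (intro has_fps_expansion_mult)
  moreover have "(\<lambda>z. G z * G z) has_fps_expansion fps_const (c1 ^ 2)
      * (1 + fps_const (- 2 * \<kappa> * of_real \<mu>) * fps_X + fps_const (\<kappa> ^ 2) * fps_X ^ 2)"
    unfolding G_square by (intro fps_expansion_intros)
  ultimately have "F * F = fps_const (c1 ^ 2)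
      * (1 + fps_const (- 2 * \<kappa> * of_real \<mu>) * fps_X + fps_const (\<kappa> ^ 2) * fps_X ^ 2)"
    by (rule fps_expansion_unique_complex)
  moreover have "F $ 0 = c1" unfolding F_def fps_expansion_def by (simp add: G_def)
  ultimately have "F $ m = Rseq hb ch tau h1 W m" for m
    by (intro fps_nth_eq_Rseq c1_nonzero)
  moreover have "Im (G z / (1 + z)) > 0" if "z \<in> ball 0 1" for z
  proof (rule Im_sqrt_quadratic_div_pos[OF Im_a_pos _ holomorphic_on_imp_continuous_on[OF holo]])
    show "4 * G z ^ 2 = (2 * cnj a + of_real \<gamma> * cnj a ^ 2)
        + 2 * (a + cnj a + of_real \<gamma> * a * cnj a) * z + (2 * a + of_real \<gamma> * a ^ 2) * z ^ 2" for z
      unfolding power2_eq_square[of "G z"] G_square by (rule four_c1_square_quadratic)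
    show "Im (G 0) \<ge> 0" using Im_c1_nonneg by (simp add: G_def)
  qed (use that h1_pos in auto)
  ultimately show ?thesis using that holo unfolding F_def by blast
qed

end

section \<open>Toeplitz forms of functions with nonnegative imaginary part\<close>

lemma Im_circlepath_mean_nonneg:
  fixes f :: "complex \<Rightarrow> complex"
  assumes int: "((\<lambda>w. f w / w) has_contour_integral (2 * pi * \<i> * V)) (circlepath 0 1)"
    and nonneg: "\<And>w. cmod w = 1 \<Longrightarrow> Im (f w) \<ge> 0"
  shows "Im V \<ge> 0"
proof -
  define g where "g t = exp (2 * of_real pi * \<i> * of_real t)" for t
  have g: "circlepath 0 1 = g" unfolding circlepath g_def by simp
  have "((\<lambda>t. f (g t) / g t * vector_derivative g (at t within {0..1}))
      has_integral (2 * pi * \<i> * V)) {0..1}"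
    using int unfolding has_contour_integral_def g .
  then have "((\<lambda>t. (2 * pi * \<i>) * f (g t)) has_integral (2 * pi * \<i> * V)) {0..1}"
  proof (rule has_integral_eq[rotated])
    fix t :: real assume "t \<in> {0..1}"
    then have "vector_derivative g (at t within {0..1}) = 2 * pi * \<i> * g t"
      using vector_derivative_circlepath01[of t 0 1] unfolding g by (simp add: g_def)
    moreover have "g t \<noteq> 0" unfolding g_def by simp
    ultimately show "f (g t) / g t * vector_derivative g (at t within {0..1}) = 2 * pi * \<i> * f (g t)"
      by simp
  qed
  then have "(((\<lambda>t. f (g t))) has_integral V) {0..1}"
    using has_integral_mult_right_iff[of "2 * pi * \<i>" "\<lambda>t. f (g t)"] by simp
  then have "((\<lambda>t. Im (f (g t))) has_integral Im V) {0..1}"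
    by (rule has_integral_Im)
  moreover have "cmod (g t) = 1" for t unfolding g_def by (simp add: norm_exp_eq_Re)
  ultimately show ?thesis
    using nonneg by (intro has_integral_nonneg[of "\<lambda>t. Im (f (g t))" "Im V" "{0..1}"]) auto
qed

lemma has_contour_integral_unit_circle_fps_nth:
  fixes f :: "complex \<Rightarrow> complex"
  assumes "f holomorphic_on ball 0 R" and "R > 1"
  shows "((\<lambda>w. f w / w ^ Suc m) has_contour_integral (2 * pi * \<i> * fps_expansion f 0 $ m))
           (circlepath 0 1)"
proof -
  have sub: "cball 0 1 \<subseteq> ball (0::complex) R" using assms(2) by auto
  have "continuous_on (cball 0 1) f"
    using holomorphic_on_imp_continuous_on[OF holomorphic_on_subset[OF assms(1) sub]] .
  moreover have "f holomorphic_on ball 0 1"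
    using holomorphic_on_subset[OF assms(1)] sub ball_subset_cball by blast
  ultimately show ?thesis
    using Cauchy_has_contour_integral_higher_derivative_circlepath[of 0 1 f 0 m]
    by (simp add: fps_expansion_def)
qed

lemma fps_expansion_mult_polynomial_nth:
  fixes K :: "complex \<Rightarrow> complex" and \<Psi> :: "complex fps"
  assumes "K holomorphic_on ball 0 R" and "R > 0" and "m \<le> M"
  shows "fps_expansion (\<lambda>w. K w * (\<Sum>a\<le>M. \<Psi> $ a * w ^ a)) 0 $ m = (fps_expansion K 0 * \<Psi>) $ m"
proof -
  define PM where "PM = (\<Sum>a\<le>M. fps_const (\<Psi> $ a) * fps_X ^ a)"
  have "K has_fps_expansion fps_expansion K 0"
    using assms(1,2) by (intro has_fps_expansion_fps_expansion[of "ball 0 R"]) auto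
  moreover have "(\<lambda>w. \<Sum>a\<le>M. \<Psi> $ a * w ^ a) has_fps_expansion PM" unfolding PM_def
    by (intro has_fps_expansion_sum has_fps_expansion_cmult_left has_fps_expansion_fps_X_power)
  ultimately have "(\<lambda>w. K w * (\<Sum>a\<le>M. \<Psi> $ a * w ^ a)) has_fps_expansion fps_expansion K 0 * PM"
    by (rule has_fps_expansion_mult)
  moreover have "PM $ n = (if n \<le> M then \<Psi> $ n else 0)" for n
    unfolding PM_def
    by (simp add: fps_sum_nth fps_X_power_nth mult.commute[of _ "if _ then _ else _"] if_distrib
        cong: if_cong)
  ultimately show ?thesis
    using assms(3) by (simp add: fps_expansion_eqI fps_mult_nth) (intro sum.cong; simp)
qed

text \<open>On the unit circle cnj w = 1 / w, so K |P|^2 / w is a combination of the K P / w^(m+1),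
  whose integrals are Taylor coefficients of K P.\<close>

lemma has_contour_integral_toeplitz_form:
  fixes K :: "complex \<Rightarrow> complex" and \<Psi> :: "complex fps" and M :: nat
  defines "P \<equiv> \<lambda>w. \<Sum>a\<le>M. \<Psi> $ a * w ^ a"
  assumes holo: "K holomorphic_on ball 0 R" and "R > 1"
  shows "((\<lambda>w. K w * (P w * cnj (P w)) / w) has_contour_integral
      (2 * pi * \<i> * (\<Sum>m\<le>M. (fps_expansion K 0 * \<Psi>) $ m * cnj (\<Psi> $ m)))) (circlepath 0 1)"
proof -
  have "(\<lambda>w. K w * P w) holomorphic_on ball 0 R"
    unfolding P_def by (intro holomorphic_intros holo)
  then have "((\<lambda>w. K w * P w / w ^ Suc m) has_contour_integral
      (2 * pi * \<i> * (fps_expansion K 0 * \<Psi>) $ m)) (circlepath 0 1)" if "m \<le> M" for m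
    using has_contour_integral_unit_circle_fps_nth[OF _ \<open>R > 1\<close>, of "\<lambda>w. K w * P w" m]
      fps_expansion_mult_polynomial_nth[OF holo _ that] \<open>R > 1\<close>
    unfolding P_def by simp
  then have "((\<lambda>w. \<Sum>m\<le>M. cnj (\<Psi> $ m) * (K w * P w / w ^ Suc m)) has_contour_integral
      (\<Sum>m\<le>M. cnj (\<Psi> $ m) * (2 * pi * \<i> * (fps_expansion K 0 * \<Psi>) $ m))) (circlepath 0 1)"
    by (intro has_contour_integral_sum has_contour_integral_lmul) auto
  also have "(\<Sum>m\<le>M. cnj (\<Psi> $ m) * (2 * pi * \<i> * (fps_expansion K 0 * \<Psi>) $ m))
      = 2 * pi * \<i> * (\<Sum>m\<le>M. (fps_expansion K 0 * \<Psi>) $ m * cnj (\<Psi> $ m))"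
    by (simp add: sum_distrib_left mult_ac)
  finally show ?thesis
  proof (rule has_contour_integral_eq)
    fix w assume "w \<in> path_image (circlepath 0 1)"
    then have "w \<noteq> 0" and "cnj w = 1 / w"
      by (auto simp: complex_div_cnj[of 1 w] complex_norm_square[symmetric])
    then have "cnj (P w) = (\<Sum>m\<le>M. cnj (\<Psi> $ m) / w ^ m)"
      unfolding P_def cnj_sum by (simp add: power_one_over)
    then show "(\<Sum>m\<le>M. cnj (\<Psi> $ m) * (K w * P w / w ^ Suc m)) = K w * (P w * cnj (P w)) / w"
      using \<open>w \<noteq> 0\<close> by (simp add: sum_distrib_left sum_divide_distrib field_simps)
  qed
qed

lemma Im_toeplitz_form_nonneg_closed_disc:
  fixes K :: "complex \<Rightarrow> complex" and \<Psi> :: "complex fps"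
  assumes "K holomorphic_on ball 0 R" and "R > 1"
    and nonneg: "\<And>w. cmod w = 1 \<Longrightarrow> Im (K w) \<ge> 0"
  shows "Im (\<Sum>m\<le>M. (fps_expansion K 0 * \<Psi>) $ m * cnj (\<Psi> $ m)) \<ge> 0"
proof (rule Im_circlepath_mean_nonneg[OF has_contour_integral_toeplitz_form[OF assms(1,2)]])
  show "Im (K w * (p * cnj p)) \<ge> 0" if "cmod w = 1" for w p
    using nonneg[OF that] by (simp add: complex_norm_square[symmetric] del: of_real_power)
qed

lemma fps_expansion_scale:
  fixes K :: "complex \<Rightarrow> complex"
  assumes "K holomorphic_on ball 0 1" and "0 < r" and "r \<le> 1"
  shows "fps_expansion (\<lambda>z. K (of_real r * z)) 0 = Abs_fps (\<lambda>n. of_real r ^ n * fps_expansion K 0 $ n)"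
proof -
  have "K has_fps_expansion fps_expansion K 0"
    using assms(1) by (intro has_fps_expansion_fps_expansion[of "ball 0 1"]) auto
  then have "(K \<circ> (\<lambda>z. of_real r * z)) has_fps_expansion
      fps_compose (fps_expansion K 0) (fps_const (of_real r) * fps_X)"
    by (intro has_fps_expansion_compose has_fps_expansion_cmult_left has_fps_expansion_fps_X) auto
  then show ?thesis by (simp add: fps_expansion_eqI fps_compose_linear o_def)
qed

text \<open>Apply the closed-disc case to K (r z) and let r tend to 1; the form is a polynomial in r.\<close>

lemma Im_toeplitz_form_nonneg:
  fixes K :: "complex \<Rightarrow> complex" and \<Psi> :: "complex fps"
  assumes holo: "K holomorphic_on ball 0 1" and nonneg: "\<And>z. z \<in> ball 0 1 \<Longrightarrow> Im (K z) \<ge> 0"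
  shows "Im (\<Sum>m\<le>M. (fps_expansion K 0 * \<Psi>) $ m * cnj (\<Psi> $ m)) \<ge> 0"
proof -
  define f where "f r = Im (\<Sum>m\<le>M. (\<Sum>i=0..m. of_real r ^ i * fps_expansion K 0 $ i * \<Psi> $ (m - i))
      * cnj (\<Psi> $ m))" for r :: real
  have pos: "f r \<ge> 0" if r: "0 < r" "r < 1" for r
  proof -
    have holo_r: "(\<lambda>z. K (of_real r * z)) holomorphic_on ball 0 (1 / r)"
    proof (rule holomorphic_on_compose_gen[unfolded o_def, OF _ holo])
      show "(\<lambda>z. of_real r * z) holomorphic_on ball (0::complex) (1 / r)" by (intro holomorphic_intros)
      have "cmod (of_real r * z) < 1" if "cmod z < 1 / r" for z
        using that r by (simp add: norm_mult field_simps)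
      then show "(\<lambda>z. of_real r * z) ` ball 0 (1 / r) \<subseteq> ball (0::complex) 1" by auto
    qed
    have "Im (K (of_real r * w)) \<ge> 0" if "cmod w = 1" for w
      using r that by (intro nonneg) (simp add: norm_mult)
    from Im_toeplitz_form_nonneg_closed_disc[OF holo_r _ this, of \<Psi> M]
    show ?thesis
      using r unfolding f_def fps_expansion_scale[OF holo r(1) less_imp_le[OF r(2)]]
      by (simp add: fps_mult_nth mult.assoc)
  qed
  have "(f \<longlongrightarrow> f 1) (at_left 1)" unfolding f_def by (intro tendsto_intros)
  moreover have "eventually (\<lambda>r. f r \<ge> 0) (at_left 1)"
    using eventually_at_left_real[of 0 1] by (rule eventually_mono) (use pos in auto)
  ultimately have "f 1 \<ge> 0" by (intro tendsto_lowerbound) auto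
  then show ?thesis by (simp add: f_def fps_mult_nth mult.assoc)
qed

context R_coefficients
begin

lemma Im_Rseq_convolution_nonneg:
  fixes \<phi> :: "nat \<Rightarrow> complex"
  assumes "\<phi> 0 = 0"
  shows "Im (\<Sum>m=1..M. (\<Sum>p=0..m. Rseq hb ch tau h1 W p * \<phi> (m - p)) * cnj (\<phi> (m - 1) + \<phi> m)) \<ge> 0"
proof -
  obtain G where holo: "G holomorphic_on ball 0 1"
    and G_nth: "\<And>m. fps_expansion G 0 $ m = Rseq hb ch tau h1 W m"
    and G_pos: "\<And>z. z \<in> ball 0 1 \<Longrightarrow> Im (G z / (1 + z)) > 0"
    using Rseq_generating_function by blast
  define K where "K z = G z / (1 + z)" for z
  have nonzero: "1 + z \<noteq> 0" if "z \<in> ball 0 1" for z :: complex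
    using that by (metis add.inverse_unique dist_0_norm mem_ball norm_minus_cancel norm_one order.irrefl)
  then have holo_K: "K holomorphic_on ball 0 1" unfolding K_def by (intro holomorphic_intros holo) auto
  have "G has_fps_expansion fps_expansion G 0"
    using holo by (intro has_fps_expansion_fps_expansion[of "ball 0 1"]) auto
  moreover have "G has_fps_expansion (1 + fps_X) * fps_expansion K 0"
  proof -
    have "eventually (\<lambda>z. z \<in> ball 0 1) (nhds (0::complex))"
      by (intro eventually_nhds_in_open) auto
    then have "eventually (\<lambda>z. (1 + z) * K z = G z) (nhds 0)"
      by (rule eventually_mono) (simp add: K_def nonzero)
    moreover have "(\<lambda>z. (1 + z) * K z) has_fps_expansion (1 + fps_X) * fps_expansion K 0"
      using holo_K by (intro fps_expansion_intros has_fps_expansion_fps_expansion[of "ball 0 1"]) auto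
    ultimately show ?thesis using has_fps_expansion_cong[of "\<lambda>z. (1 + z) * K z" G] by blast
  qed
  ultimately have G_K: "fps_expansion G 0 = (1 + fps_X) * fps_expansion K 0"
    by (rule fps_expansion_unique_complex)
  define \<Psi> where "\<Psi> = (1 + fps_X) * Abs_fps \<phi>"
  have \<Psi>_nth: "\<Psi> $ m = \<phi> m + (if m = 0 then 0 else \<phi> (m - 1))" for m
    unfolding \<Psi>_def by (simp add: distrib_right)
  have "(\<Sum>p=0..m. Rseq hb ch tau h1 W p * \<phi> (m - p)) = (fps_expansion K 0 * \<Psi>) $ m" for m
  proof -
    have "(\<Sum>p=0..m. Rseq hb ch tau h1 W p * \<phi> (m - p)) = (fps_expansion G 0 * Abs_fps \<phi>) $ m"
      by (simp add: fps_mult_nth G_nth)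
    then show ?thesis unfolding G_K \<Psi>_def by (simp add: mult_ac)
  qed
  then have "(\<Sum>m=1..M. (\<Sum>p=0..m. Rseq hb ch tau h1 W p * \<phi> (m - p)) * cnj (\<phi> (m - 1) + \<phi> m))
      = (\<Sum>m\<in>{1..M}. (fps_expansion K 0 * \<Psi>) $ m * cnj (\<Psi> $ m))"
    by (intro sum.cong) (auto simp: \<Psi>_nth add.commute)
  also have "\<dots> = (\<Sum>m\<le>M. (fps_expansion K 0 * \<Psi>) $ m * cnj (\<Psi> $ m))"
    using assms by (intro sum.mono_neutral_left) (auto simp: \<Psi>_nth)
  finally show ?thesis
    using Im_toeplitz_form_nonneg[OF holo_K] G_pos unfolding K_def by (simp add: less_imp_le)
qed

end

section \<open>Discrete sine transforms\<close>

lemma fun_upd_in_grid: "j \<in> grid n J \<Longrightarrow> k \<in> {2..n} \<Longrightarrow> t \<in> {1..<J k} \<Longrightarrow> j(k := t) \<in> grid n J"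
  unfolding grid_def by (auto simp: PiE_iff extensional_def)

lemma grid_memD: "j \<in> grid n J \<Longrightarrow> k \<in> {2..n} \<Longrightarrow> j k \<in> {1..<J k}"
  unfolding grid_def by (auto simp: PiE_iff)

lemma dst_linear: "dst J k (\<lambda>j. c * U j + d * W j) = (\<lambda>q. c * dst J k U q + d * dst J k W q)"
  unfolding dst_def by (auto simp: sum.distrib sum_distrib_left algebra_simps)

lemma dst_all_linear:
  "dst_all n J (\<lambda>j. c * U j + d * W j) q = c * dst_all n J U q + d * dst_all n J W q"
proof -
  have "foldl (\<lambda>Q k. dst J k Q) (\<lambda>j. c * U j + d * W j) ks
     = (\<lambda>q. c * foldl (\<lambda>Q k. dst J k Q) U ks q + d * foldl (\<lambda>Q k. dst J k Q) W ks q)" for ks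
    by (induction ks arbitrary: U W) (simp_all add: dst_linear)
  then show ?thesis unfolding dst_all_def by simp
qed

lemma dst_all_eq_0:
  assumes "\<forall>j\<in>grid n J. U j = 0" and "q \<in> grid n J"
  shows "dst_all n J U q = 0"
proof -
  have "\<forall>q\<in>grid n J. foldl (\<lambda>Q k. dst J k Q) U ks q = 0" if "set ks \<subseteq> {2..n}" for ks
    using that assms(1)
  proof (induction ks arbitrary: U)
    case (Cons k ks)
    have "\<forall>q\<in>grid n J. dst J k U q = 0"
      using Cons.prems fun_upd_in_grid unfolding dst_def by (auto intro!: sum.neutral)
    then show ?case using Cons.IH Cons.prems(1) by simp
  qed simp
  moreover have "set [2..<Suc n] \<subseteq> {2..n}" by auto
  ultimately show ?thesis unfolding dst_all_def using assms(2) by blast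
qed

text \<open>The transposed sine matrix is J_k / 2 times the inverse one; on the grid this amounts to the
  involution (j, t) \<mapsto> (j(k := t), j k) of the summation indices.\<close>

lemma idst_adjoint:
  assumes k: "k \<in> {2..n}" and "J k > 0"
  shows "(\<Sum>j\<in>grid n J. idst J k Y j * cnj (B j))
       = of_real (real (J k) / 2) * (\<Sum>q\<in>grid n J. Y q * cnj (dst J k B q))"
proof -
  define I where "I = {1..<J k}"
  define s where "s x t = complex_of_real (sin (pi * real x * real t / real (J k)))" for x t :: nat
  define \<sigma> where "\<sigma> = (\<lambda>(j :: nat \<Rightarrow> nat, t :: nat). (j(k := t), j k))"
  have \<sigma>_inv: "\<sigma> (\<sigma> a) = a" for a unfolding \<sigma>_def by (cases a) auto
  have \<sigma>_mem: "\<sigma> a \<in> grid n J \<times> I" if "a \<in> grid n J \<times> I" for a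
    using that fun_upd_in_grid[OF _ k] grid_memD[OF _ k] unfolding \<sigma>_def I_def by auto
  have "(\<Sum>j\<in>grid n J. idst J k Y j * cnj (B j))
      = (\<Sum>(j, t)\<in>grid n J \<times> I. Y (j(k := t)) * s t (j k) * cnj (B j))"
    unfolding idst_def I_def s_def by (simp add: sum_distrib_right sum.cartesian_product)
  also have "\<dots> = (\<Sum>(q, t)\<in>grid n J \<times> I. Y q * s (q k) t * cnj (B (q(k := t))))"
    by (rule sum.reindex_bij_witness[of _ \<sigma> \<sigma>]) (auto simp: \<sigma>_inv \<sigma>_mem, auto simp: \<sigma>_def)
  also have "\<dots> = of_real (real (J k) / 2) * (\<Sum>q\<in>grid n J. Y q * cnj (dst J k B q))"
    unfolding dst_def I_def s_def using assms(2)
    by (simp add: sum.cartesian_product[symmetric] sum_distrib_left sum_distrib_right cnj_sum mult_ac)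
  finally show ?thesis .
qed

lemma idst_all_adjoint:
  assumes "\<forall>k\<in>{2..n}. J k > 0"
  shows "(\<Sum>j\<in>grid n J. idst_all n J Y j * cnj (B j))
       = of_real (\<Prod>k=2..n. real (J k) / 2) * (\<Sum>q\<in>grid n J. Y q * cnj (dst_all n J B q))"
proof -
  have fold_adjoint: "(\<Sum>j\<in>grid n J. foldr (\<lambda>k Q. idst J k Q) ks Y j * cnj (B j))
      = of_real (\<Prod>k\<leftarrow>ks. real (J k) / 2)
        * (\<Sum>q\<in>grid n J. Y q * cnj (foldl (\<lambda>Q k. dst J k Q) B ks q))"
    if "set ks \<subseteq> {2..n}" for ks
    using that
  proof (induction ks arbitrary: B)
    case (Cons k ks)
    then show ?case using assms by (simp add: idst_adjoint)
  qed simp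
  have prod_eq: "(\<Prod>k\<leftarrow>[2..<Suc n]. real (J k) / 2) = (\<Prod>k=2..n. real (J k) / 2)"
    by (subst prod.distinct_set_conv_list[symmetric]) (simp_all add: atLeastLessThanSuc_atLeastAtMost del: upt_Suc)
  have "set [2..<Suc n] \<subseteq> {2..n}" by auto
  from fold_adjoint[OF this] show ?thesis unfolding idst_all_def dst_all_def prod_eq .
qed

lemma sig_nonneg: "sig X J k q \<ge> 0"
proof -
  have "(sin (pi * real q * (X k / real (J k)) / (2 * X k)))\<^sup>2 \<le> 1"
    by (simp add: abs_square_le_1)
  then show ?thesis unfolding sig_def Let_def by simp
qed

lemma inner_grid_idst_all:
  assumes "\<forall>k\<in>{2..n}. J k > 0"
  shows "inner_grid n X J (idst_all n J Y) B
       = of_real (\<Prod>k=2..n. X k / 2) * (\<Sum>q\<in>grid n J. Y q * cnj (dst_all n J B q))"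
proof -
  have "inner_grid n X J (idst_all n J Y) B
      = (\<Sum>j\<in>grid n J. idst_all n J Y j * cnj (B j)) * of_real (\<Prod>k=2..n. X k / real (J k))"
    unfolding inner_grid_def by (simp add: sum_distrib_right)
  also have "\<dots> = of_real ((\<Prod>k=2..n. X k / real (J k)) * (\<Prod>k=2..n. real (J k) / 2))
      * (\<Sum>q\<in>grid n J. Y q * cnj (dst_all n J B q))"
    unfolding idst_all_adjoint[OF assms] of_real_mult by (simp only: mult_ac)
  also have "(\<Prod>k=2..n. X k / real (J k)) * (\<Prod>k=2..n. real (J k) / 2) = (\<Prod>k=2..n. X k / 2)"
    using assms by (simp add: prod.distrib[symmetric])
  finally show ?thesis .
qed

lemma inner_grid_Sref_average:
  assumes "\<forall>k\<in>{2..n}. J k > 0"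
  shows "inner_grid n X J (Sref n hbar ch V tau X J Phi m) (\<lambda>j. (Phi (m - 1) j + Phi m j) / 2)
       = of_real ((\<Prod>k=2..n. X k / 2) / 2) * (\<Sum>q\<in>grid n J. of_real (\<Prod>k=2..n. sig X J k (q k))
           * ((\<Sum>p=0..m. Rseq hbar ch tau (X 1 / real (J 1)) (Vq n V ch X J q) p * dst_all n J (Phi (m - p)) q)
              * cnj (dst_all n J (Phi (m - 1)) q + dst_all n J (Phi m) q)))"
proof -
  have average: "dst_all n J (\<lambda>j. (Phi (m - 1) j + Phi m j) / 2) q
      = (dst_all n J (Phi (m - 1)) q + dst_all n J (Phi m) q) / 2" for q
    using dst_all_linear[of n J "1/2" "Phi (m - 1)" "1/2" "Phi m" q] by (simp add: add_divide_distrib)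
  show ?thesis
    unfolding Sref_def inner_grid_idst_all[OF assms] average
    by (simp add: sum_distrib_left mult_ac)
qed

lemma sum_inner_grid_Sref_average:
  assumes "\<forall>k\<in>{2..n}. J k > 0"
  shows "(\<Sum>m=1..M. inner_grid n X J (Sref n hbar ch V tau X J Phi m)
            (\<lambda>j. (Phi (m - 1) j + Phi m j) / 2) * of_real tau)
       = of_real ((\<Prod>k=2..n. X k / 2) / 2 * tau) * (\<Sum>q\<in>grid n J. of_real (\<Prod>k=2..n. sig X J k (q k))
           * (\<Sum>m=1..M. (\<Sum>p=0..m. Rseq hbar ch tau (X 1 / real (J 1)) (Vq n V ch X J q) p
                 * dst_all n J (Phi (m - p)) q) * cnj (dst_all n J (Phi (m - 1)) q + dst_all n J (Phi m) q)))"
  unfolding inner_grid_Sref_average[OF assms]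
  by (simp add: sum_distrib_left sum_distrib_right mult_ac) (rule sum.swap)

theorem lemma4p1:
  fixes n :: nat and hbar ch V tau :: real and X :: "nat \<Rightarrow> real" and J :: "nat \<Rightarrow> nat"
    and Phi :: "nat \<Rightarrow> (nat \<Rightarrow> nat) \<Rightarrow> complex" and M :: nat
  assumes "n \<ge> 2" and "hbar > 0" and "ch > 0" and "tau > 0"
    and "\<forall>k\<in>{1..n}. X k > 0" and "\<forall>k\<in>{1..n}. J k \<ge> 2"
    and "\<forall>j\<in>grid n J. Phi 0 j = 0"
    and "M \<ge> 1"
  shows "Im (\<Sum>m=1..M. inner_grid n X J (Sref n hbar ch V tau X J Phi m)
                 (\<lambda>j. (Phi (m - 1) j + Phi m j) / 2) * complex_of_real tau) \<ge> 0"
proof -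
  have J_pos: "\<forall>k\<in>{2..n}. J k > 0"
  proof
    fix k :: nat assume "k \<in> {2..n}"
    then have "J k \<ge> 2" using assms(6) by simp
    then show "J k > 0" by simp
  qed
  have "X 1 / real (J 1) > 0" using assms(1,5,6) by force
  then have "R_coefficients hbar ch tau (X 1 / real (J 1))" using assms(2-4) by unfold_locales
  then have "Im (\<Sum>m=1..M. (\<Sum>p=0..m. Rseq hbar ch tau (X 1 / real (J 1)) (Vq n V ch X J q) p
        * dst_all n J (Phi (m - p)) q) * cnj (dst_all n J (Phi (m - 1)) q + dst_all n J (Phi m) q)) \<ge> 0"
    if "q \<in> grid n J" for q
    using dst_all_eq_0[OF assms(7) that] by (rule R_coefficients.Im_Rseq_convolution_nonneg)
  moreover have "(\<Prod>k=2..n. X k / 2) > 0" using assms(5) by (intro prod_pos) auto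
  ultimately show ?thesis
    unfolding sum_inner_grid_Sref_average[OF J_pos] using assms(4)
    by (simp add: Im_sum sum_nonneg sig_nonneg prod_nonneg del: of_real_prod)
qed

end
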